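(* Let $p$ be a complex polynomial with exactly two distinct roots, and let $h\in\mathbb{C}$ satisfy $|h-\mu|<\mu$, where $\mu$ is the smaller of the two root multiplicities. Then the Julia set of the relaxed Newton map $N_{h,p}(z)=z-h\,p(z)/p'(z)$ is a (straight) line (together with $\infty$) if and only if the two roots of $p$ have equal multiplicity and $h$ is real.
   Context: $N_{h,p}$ is regarded as a rational map of the Riemann sphere; its Julia set is the complement of the set of points where the iterates form a normal family. The condition $|h-\mu|<\mu$ ensures both roots are attracting fixed points of $N_{h,p}$ (a root of multiplicity $\mu_0$ has multiplier $1-h/\mu_0$). *)

theory Defs
  imports "HOL-Analysis.Analysis" "HOL-Computational_Algebra.Polynomial_Factorial" "HOL-Computational_Algebra.Field_as_Ring"
begin

text \<open>The Riemann sphere is modelled as \<open>complex option\<close>: \<open>Some z\<close> is the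
finite point z and \<open>None\<close> is the point at infinity.\<close>

type_synonym rsphere = "complex option"

definition stereo :: "rsphere \<Rightarrow> complex \<times> real" where
  "stereo w = (case w of
      None \<Rightarrow> (0, 1)
    | Some z \<Rightarrow> ((2 * z) / complex_of_real (1 + (cmod z)\<^sup>2),
                 ((cmod z)\<^sup>2 - 1) / ((cmod z)\<^sup>2 + 1)))"

definition cdist :: "rsphere \<Rightarrow> rsphere \<Rightarrow> real" where
  "cdist v w = dist (stereo v) (stereo w)"

definition sphere_open :: "rsphere set \<Rightarrow> bool" where
  "sphere_open U \<longleftrightarrow> (\<forall>z\<in>U. \<exists>e>0. \<forall>w. cdist z w < e \<longrightarrow> w \<in> U)"

definition loc_unif_conv ::
    "rsphere set \<Rightarrow> (nat \<Rightarrow> rsphere \<Rightarrow> rsphere) \<Rightarrow> (rsphere \<Rightarrow> rsphere) \<Rightarrow> bool" where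
  "loc_unif_conv U F g \<longleftrightarrow>
     (\<forall>w\<in>U. \<exists>d>0. \<forall>e>0. \<exists>N. \<forall>n\<ge>N. \<forall>x\<in>U. cdist w x < d \<longrightarrow> cdist (F n x) (g x) < e)"

definition normal_iterates :: "(rsphere \<Rightarrow> rsphere) \<Rightarrow> rsphere set \<Rightarrow> bool" where
  "normal_iterates f U \<longleftrightarrow>
     (\<forall>k :: nat \<Rightarrow> nat. \<exists>r g. strict_mono r \<and> loc_unif_conv U (\<lambda>n. (f ^^ k (r n))) g)"

definition fatou_set :: "(rsphere \<Rightarrow> rsphere) \<Rightarrow> rsphere set" where
  "fatou_set f = {z. \<exists>U. sphere_open U \<and> z \<in> U \<and> normal_iterates f U}"

definition julia_set :: "(rsphere \<Rightarrow> rsphere) \<Rightarrow> rsphere set" where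
  "julia_set f = UNIV - fatou_set f"

text \<open>Extension of the rational function P/Q (P, Q coprime, Q \<noteq> 0) to the sphere.\<close>
definition rat_ext :: "complex poly \<Rightarrow> complex poly \<Rightarrow> rsphere \<Rightarrow> rsphere" where
  "rat_ext P Q w = (case w of
      Some z \<Rightarrow> (if poly Q z = 0 then None else Some (poly P z / poly Q z))
    | None \<Rightarrow> (if degree P > degree Q then None
               else if degree P = degree Q then Some (lead_coeff P / lead_coeff Q)
               else Some 0))"

text \<open>Relaxed Newton map N_{h,p}(z) = z - h p(z)/p'(z) = (z p' - h p)/p', written in
lowest terms and regarded as a map of the Riemann sphere.\<close>
definition relaxed_newton :: "complex \<Rightarrow> complex poly \<Rightarrow> rsphere \<Rightarrow> rsphere" where
  "relaxed_newton h p =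
     (let P0 = [:0, 1:] * pderiv p - smult h p;
          Q0 = pderiv p;
          g = gcd P0 Q0
      in rat_ext (P0 div g) (Q0 div g))"

end

theory Submission
  imports Defs "HOL-Computational_Algebra.Fundamental_Theorem_Algebra"
begin

text \<open>Write \<open>p = c (z - a)\<^sup>m (z - b)\<^sup>n\<close>. In lowest terms the relaxed Newton map is
  \<open>N(z) = z - h (z - a) (z - b) / (m (z - b) + n (z - a))\<close>, and
  \<open>N(z) - a = (z - a) A(z) / D(z)\<close>, \<open>N(z) - b = (z - b) B(z) / D(z)\<close> with linear \<open>A\<close>, \<open>B\<close>, \<open>D\<close>.
  If \<open>m = n\<close> and \<open>h = r\<close> is real, then \<open>0 < r < 2 m\<close> and
  \<open>|A|\<^sup>2 - |B|\<^sup>2 = r (2 m - r) (|z - a|\<^sup>2 - |z - b|\<^sup>2)\<close>, so \<open>N\<close> contracts the ratio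
  \<open>|z - a| / |z - b|\<close> on every Apollonius disc around \<open>a\<close> inside the half-plane closer to \<open>a\<close>:
  that half-plane lies in the basin of \<open>a\<close>, and symmetrically for \<open>b\<close>. Every point of the
  perpendicular bisector has nearby points attracted to \<open>a\<close> and to \<open>b\<close>, so the bisector is
  the Julia set.

  Conversely, if the Julia set is a line, it misses the attracting root \<open>a\<close> and, the Fatou set
  being backward invariant, is mapped into itself by \<open>N\<close>. In coordinates in which the line is the
  real axis, \<open>N\<close> is then real on the reals; comparing it with its complex conjugate forces the
  roots to be mirror images in the line, \<open>h\<close> to be real and \<open>m = n\<close>.\<close>

section \<open>The chordal metric\<close>

lemma cdist_commute: "cdist v w = cdist w v"
  by (simp add: cdist_def dist_commute)

lemma cdist_triangle: "cdist u w \<le> cdist u v + cdist v w"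
  unfolding cdist_def by (rule dist_triangle)

lemma isCont_stereo_Some: "isCont (\<lambda>z. stereo (Some z)) z"
proof -
  have nz: "(cmod w)\<^sup>2 + 1 \<noteq> 0" for w
    by (smt (verit) zero_le_power2)
  then have "complex_of_real (1 + (cmod w)\<^sup>2) \<noteq> 0" for w
    by (metis add.commute of_real_eq_0_iff)
  with nz show ?thesis
    unfolding stereo_def option.case by (intro continuous_intros; assumption?)
qed

lemma snd_stereo_Some_less: "snd (stereo (Some z)) < 1"
proof -
  have "(cmod z)\<^sup>2 + 1 > 0" by (rule add_nonneg_pos) simp_all
  then show ?thesis by (simp add: stereo_def divide_less_eq)
qed

lemma stereo_Some_inverse: "fst (stereo (Some z)) / of_real (1 - snd (stereo (Some z))) = z"
proof -
  define s where "s = (cmod z)\<^sup>2"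
  have s: "1 + s > 0" by (simp add: s_def add_pos_nonneg)
  then have "1 - (s - 1) / (s + 1) = 2 / (1 + s)" by (simp add: field_simps)
  moreover have "2 * z / of_real (1 + s) / of_real (2 / (1 + s)) = z"
    using s by (simp add: field_simps del: of_real_add)
  ultimately show ?thesis by (simp add: stereo_def s_def del: of_real_add)
qed

lemma cdist_eq_0_iff: "cdist v w = 0 \<longleftrightarrow> v = w"
proof
  assume "cdist v w = 0"
  then have eq: "stereo v = stereo w" by (simp add: cdist_def)
  show "v = w"
  proof (cases v; cases w)
    fix z assume "v = None" "w = Some z"
    then show ?thesis using eq snd_stereo_Some_less[of z] by (simp add: stereo_def)
  next
    fix z assume "v = Some z" "w = None"
    then show ?thesis using eq snd_stereo_Some_less[of z] by (simp add: stereo_def)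
  next
    fix z z' assume "v = Some z" "w = Some z'"
    then show ?thesis using eq stereo_Some_inverse[of z] stereo_Some_inverse[of z'] by metis
  qed simp
qed (simp add: cdist_def)

lemma cdist_pos: "v \<noteq> w \<Longrightarrow> 0 < cdist v w"
  using cdist_eq_0_iff[of v w] by (simp add: cdist_def)

lemma cdist_Some_small:
  assumes "e > 0"
  shows "\<exists>d>0. \<forall>w. cmod (w - z) < d \<longrightarrow> cdist (Some z) (Some w) < e"
  using isCont_stereo_Some[of z] assms
  unfolding continuous_at_eps_delta cdist_def by (simp add: dist_norm norm_minus_commute)

lemma cdist_near_Some:
  assumes "e > 0"
  shows "\<exists>d>0. \<forall>v. cdist (Some z) v < d \<longrightarrow> (\<exists>w. v = Some w \<and> cmod (w - z) < e)"
proof -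
  define g :: "complex \<times> real \<Rightarrow> complex" where "g p = fst p / of_real (1 - snd p)" for p
  have g: "g (stereo (Some u)) = u" for u
    unfolding g_def by (rule stereo_Some_inverse)
  have "isCont g (stereo (Some z))"
    using snd_stereo_Some_less[of z] unfolding g_def by (intro continuous_intros) auto
  then obtain d where d: "d > 0" "\<forall>p. dist p (stereo (Some z)) < d \<longrightarrow> dist (g p) (g (stereo (Some z))) < e"
    using assms unfolding continuous_at_eps_delta by blast
  have "\<forall>v. cdist (Some z) v < min d (cdist (Some z) None) \<longrightarrow> (\<exists>w. v = Some w \<and> cmod (w - z) < e)"
  proof (intro allI impI)
    fix v assume v: "cdist (Some z) v < min d (cdist (Some z) None)"
    then obtain w where w: "v = Some w" by (cases v) auto
    then have "dist (g (stereo (Some w))) (g (stereo (Some z))) < e"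
      using d(2)[rule_format, of "stereo (Some w)"] v by (simp add: cdist_def dist_commute)
    then show "\<exists>w. v = Some w \<and> cmod (w - z) < e"
      using w by (simp add: g dist_norm)
  qed
  moreover have "0 < min d (cdist (Some z) None)" using d(1) cdist_pos[of "Some z" None] by simp
  ultimately show ?thesis by blast
qed

lemma cdist_None_Some: "cdist None (Some w) = 2 / sqrt (1 + (cmod w)\<^sup>2)"
proof -
  define s where "s = (cmod w)\<^sup>2"
  have s: "1 + s > 0" by (simp add: s_def add_pos_nonneg)
  have "cdist None (Some w) = sqrt ((2 * cmod w / (1 + s))\<^sup>2 + (1 - (s - 1) / (s + 1))\<^sup>2)"
    using s unfolding cdist_def stereo_def s_def
    by (simp add: dist_norm norm_Pair norm_divide norm_mult del: of_real_add)
  also have "(2 * cmod w / (1 + s))\<^sup>2 + (1 - (s - 1) / (s + 1))\<^sup>2 = 4 / (1 + s)"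
  proof -
    have "(2 * cmod w / (1 + s))\<^sup>2 = 4 * s / (1 + s)\<^sup>2"
      by (simp add: power_divide power_mult_distrib s_def)
    moreover have "1 - (s - 1) / (s + 1) = 2 / (1 + s)"
      using s by (simp add: field_simps)
    moreover have "4 * s / (1 + s)\<^sup>2 + (2 / (1 + s))\<^sup>2 = 4 * (1 + s) / (1 + s)\<^sup>2"
      by (simp add: power_divide add_divide_distrib algebra_simps)
    moreover have "4 * (1 + s) / (1 + s)\<^sup>2 = 4 / (1 + s)"
      using s by (simp add: power2_eq_square del: distrib_left_numeral)
    ultimately show ?thesis by simp
  qed
  finally show ?thesis
    by (simp add: s_def real_sqrt_divide)
qed

lemma eventually_cdist_None_at_infinity:
  assumes "e > 0"
  shows "\<forall>\<^sub>F w in at_infinity. cdist None (Some w) < e"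
proof (rule eventually_at_infinityI[of "2 / e + 1"])
  fix w :: complex assume w: "2 / e + 1 \<le> cmod w"
  have "2 < e * cmod w" using w assms by (simp add: field_simps)
  also have "cmod w \<le> sqrt (1 + (cmod w)\<^sup>2)" by (rule real_le_rsqrt) simp
  finally have "2 < e * sqrt (1 + (cmod w)\<^sup>2)" using assms by simp
  then show "cdist None (Some w) < e"
    by (simp add: cdist_None_Some divide_less_eq add_pos_nonneg mult.commute)
qed

lemma cdist_near_None:
  "\<exists>d>0. \<forall>v. cdist None v < d \<longrightarrow> v = None \<or> (\<exists>w. v = Some w \<and> R \<le> cmod w)"
proof -
  have "cdist None (Some w) \<ge> 2 / (1 + \<bar>R\<bar>)" if "cmod w < R" for w
  proof -
    have "sqrt (1 + (cmod w)\<^sup>2) \<le> 1 + cmod w"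
      by (rule real_le_lsqrt) (auto simp: power2_eq_square algebra_simps)
    with that show ?thesis
      by (simp add: cdist_None_Some frac_le add_pos_nonneg)
  qed
  moreover have "0 < 2 / (1 + \<bar>R\<bar>)" by (simp add: add_pos_nonneg)
  ultimately show ?thesis
    by (metis not_le option.exhaust less_le_trans cdist_None_Some)
qed

lemma sphere_open_Some_image:
  assumes "open A"
  shows "sphere_open (Some ` A)"
  unfolding sphere_open_def
proof
  fix v assume "v \<in> Some ` A"
  with assms obtain z e where z: "v = Some z" "e > 0" "\<forall>w. dist w z < e \<longrightarrow> w \<in> A"
    unfolding open_dist by blast
  obtain d where "d > 0" "\<forall>u. cdist (Some z) u < d \<longrightarrow> (\<exists>w. u = Some w \<and> cmod (w - z) < e)"
    using cdist_near_Some[OF z(2)] by blast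
  with z show "\<exists>d>0. \<forall>u. cdist v u < d \<longrightarrow> u \<in> Some ` A"
    by (metis dist_norm image_eqI)
qed

section \<open>Continuity, normality and the Fatou set\<close>

definition sphere_cont_at :: "(rsphere \<Rightarrow> rsphere) \<Rightarrow> rsphere \<Rightarrow> bool" where
  "sphere_cont_at f x \<longleftrightarrow> (\<forall>e>0. \<exists>d>0. \<forall>y. cdist x y < d \<longrightarrow> cdist (f x) (f y) < e)"

definition orbit_tendsto :: "(rsphere \<Rightarrow> rsphere) \<Rightarrow> rsphere \<Rightarrow> rsphere \<Rightarrow> bool" where
  "orbit_tendsto f x p \<longleftrightarrow> (\<forall>e>0. \<exists>N. \<forall>k\<ge>N. cdist ((f ^^ k) x) p < e)"

lemma sphere_cont_at_funpow:
  assumes "\<And>x. sphere_cont_at f x"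
  shows "sphere_cont_at (f ^^ n) x"
proof (induction n arbitrary: x)
  case 0
  then show ?case by (auto simp: sphere_cont_at_def)
next
  case (Suc n)
  then show ?case
    using assms unfolding sphere_cont_at_def funpow_Suc_right comp_def by metis
qed

lemma sphere_cont_at_Some:
  assumes cont: "isCont g z" and eq: "\<forall>\<^sub>F w in nhds z. f (Some w) = Some (g w)"
  shows "sphere_cont_at f (Some z)"
  unfolding sphere_cont_at_def
proof (intro allI impI)
  fix e :: real assume "e > 0"
  obtain s1 where s1: "s1 > 0" "\<forall>w. cmod (w - g z) < s1 \<longrightarrow> cdist (Some (g z)) (Some w) < e"
    using cdist_Some_small[OF \<open>e > 0\<close>] by blast
  obtain s2 where s2: "s2 > 0" "\<forall>w. dist w z < s2 \<longrightarrow> dist (g w) (g z) < s1"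
    using cont s1(1) unfolding continuous_at_eps_delta by blast
  obtain s3 where s3: "s3 > 0" "\<forall>w. dist w z < s3 \<longrightarrow> f (Some w) = Some (g w)"
    using eq unfolding eventually_nhds_metric by blast
  obtain d where d: "d > 0" "\<forall>v. cdist (Some z) v < d \<longrightarrow> (\<exists>w. v = Some w \<and> cmod (w - z) < min s2 s3)"
    using cdist_near_Some[of "min s2 s3" z] s2(1) s3(1) by auto
  have fz: "f (Some z) = Some (g z)" using s3 by simp
  have "cdist (f (Some z)) (f v) < e" if v: "cdist (Some z) v < d" for v
  proof -
    obtain w where w: "v = Some w" "cmod (w - z) < s2" "cmod (w - z) < s3"
      using d(2) v by auto
    then have "f v = Some (g w)" "cmod (g w - g z) < s1"
      using s2(2) s3(2) by (auto simp: dist_norm)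
    then show ?thesis using s1(2) fz by (simp add: norm_minus_commute)
  qed
  with d(1) show "\<exists>d>0. \<forall>y. cdist (Some z) y < d \<longrightarrow> cdist (f (Some z)) (f y) < e"
    by blast
qed

lemma sphere_cont_at_pole:
  assumes pole: "f (Some z) = None" and eq: "\<forall>\<^sub>F w in at z. f (Some w) = Some (g w)"
    and lim: "filterlim g at_infinity (at z)"
  shows "sphere_cont_at f (Some z)"
  unfolding sphere_cont_at_def
proof (intro allI impI)
  fix e :: real assume "e > 0"
  have "\<forall>\<^sub>F w in at z. cdist None (Some (g w)) < e"
    using lim eventually_cdist_None_at_infinity[OF \<open>e > 0\<close>] by (rule filterlim_iff[THEN iffD1, rule_format])
  with eq have "\<forall>\<^sub>F w in at z. cdist None (f (Some w)) < e"
    by eventually_elim simp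
  then obtain s where s: "s > 0" "\<forall>w. w \<noteq> z \<and> dist w z < s \<longrightarrow> cdist None (f (Some w)) < e"
    unfolding eventually_at by auto
  obtain d where d: "d > 0" "\<forall>v. cdist (Some z) v < d \<longrightarrow> (\<exists>w. v = Some w \<and> cmod (w - z) < s)"
    using cdist_near_Some[OF s(1)] by blast
  have "cdist (f (Some z)) (f v) < e" if v: "cdist (Some z) v < d" for v
  proof -
    obtain w where w: "v = Some w" "cmod (w - z) < s" using d(2) v by blast
    show ?thesis
    proof (cases "w = z")
      case True
      then show ?thesis using w(1) pole \<open>e > 0\<close> by (simp add: cdist_def)
    next
      case False
      then show ?thesis using s(2) w pole by (simp add: dist_norm)
    qed
  qed
  with d(1) show "\<exists>d>0. \<forall>y. cdist (Some z) y < d \<longrightarrow> cdist (f (Some z)) (f y) < e"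
    by blast
qed

lemma sphere_cont_at_None:
  assumes inf: "f None = None" and eq: "\<forall>\<^sub>F w in at_infinity. f (Some w) = Some (g w)"
    and lim: "filterlim g at_infinity at_infinity"
  shows "sphere_cont_at f None"
  unfolding sphere_cont_at_def
proof (intro allI impI)
  fix e :: real assume "e > 0"
  have "\<forall>\<^sub>F w in at_infinity. cdist None (Some (g w)) < e"
    using lim eventually_cdist_None_at_infinity[OF \<open>e > 0\<close>] by (rule filterlim_iff[THEN iffD1, rule_format])
  with eq have "\<forall>\<^sub>F w in at_infinity. cdist None (f (Some w)) < e"
    by eventually_elim simp
  then obtain R where R: "\<forall>w. R \<le> cmod w \<longrightarrow> cdist None (f (Some w)) < e"
    unfolding eventually_at_infinity by blast
  obtain d where d: "d > 0" "\<forall>v. cdist None v < d \<longrightarrow> v = None \<or> (\<exists>w. v = Some w \<and> R \<le> cmod w)"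
    using cdist_near_None by blast
  have "cdist (f None) (f v) < e" if "cdist None v < d" for v
    using d(2) that R inf \<open>e > 0\<close> by (auto simp: cdist_def)
  with d(1) show "\<exists>d>0. \<forall>y. cdist None y < d \<longrightarrow> cdist (f None) (f y) < e"
    by blast
qed

lemma subseq_const_or_tendsto_top:
  fixes k :: "nat \<Rightarrow> nat"
  obtains r :: "nat \<Rightarrow> nat" and j where "strict_mono r" "\<And>n. k (r n) = j"
  | "filterlim k at_top sequentially"
proof (cases "\<exists>j. infinite {n. k n = j}")
  case True
  then obtain j where j: "infinite {n. k n = j}" by blast
  show ?thesis
  proof (rule that(1)[of "enumerate {n. k n = j}" j])
    show "strict_mono (enumerate {n. k n = j})" using j by (rule strict_mono_enumerate)
    show "k (enumerate {n. k n = j} n) = j" for n using enumerate_in_set[OF j] by blast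
  qed
next
  case False
  have "\<forall>\<^sub>F n in sequentially. N \<le> k n" for N
  proof -
    have "finite (\<Union>j<N. {n. k n = j})" using False by blast
    then have "finite {n. k n < N}" by (rule rev_finite_subset) auto
    then obtain M where "\<forall>n\<in>{n. k n < N}. n < M"
      using finite_nat_set_iff_bounded by blast
    then have "\<forall>n\<ge>M. N \<le> k n" by (meson leD mem_Collect_eq not_le)
    then show ?thesis
      unfolding eventually_sequentially by blast
  qed
  then show ?thesis using that(2) by (simp add: filterlim_at_top)
qed

lemma normal_iteratesI:
  assumes "\<And>k. filterlim k at_top sequentially \<Longrightarrow>
      \<exists>r g. strict_mono r \<and> loc_unif_conv U (\<lambda>n. f ^^ k (r n)) g"
  shows "normal_iterates f U"
  unfolding normal_iterates_def
proof
  fix k :: "nat \<Rightarrow> nat"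
  show "\<exists>r g. strict_mono r \<and> loc_unif_conv U (\<lambda>n. f ^^ k (r n)) g"
  proof (rule subseq_const_or_tendsto_top[of k])
    fix r :: "nat \<Rightarrow> nat" and j assume "strict_mono r" "\<And>n. k (r n) = j"
    moreover from this(2) have "loc_unif_conv U (\<lambda>n. f ^^ k (r n)) (f ^^ j)"
      by (auto simp: loc_unif_conv_def cdist_def intro!: exI[of _ "1::real"])
    ultimately show ?thesis by blast
  qed (rule assms)
qed

lemma fatou_if_uniform_limit:
  assumes U: "sphere_open U" "x \<in> U"
    and unif: "\<And>e. e > 0 \<Longrightarrow> \<exists>N. \<forall>n\<ge>N. \<forall>v\<in>U. cdist ((f ^^ n) v) q < e"
  shows "x \<in> fatou_set f"
proof -
  have "normal_iterates f U"
  proof (rule normal_iteratesI)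
    fix k :: "nat \<Rightarrow> nat" assume k: "filterlim k at_top sequentially"
    have "loc_unif_conv U (\<lambda>n. f ^^ k n) (\<lambda>_. q)"
      unfolding loc_unif_conv_def
    proof (intro ballI exI[of _ "1::real"] conjI allI impI)
      fix w and e :: real assume "e > 0"
      then obtain N where N: "\<forall>n\<ge>N. \<forall>v\<in>U. cdist ((f ^^ n) v) q < e" using unif by blast
      obtain M where "\<forall>n\<ge>M. N \<le> k n"
        using k unfolding filterlim_at_top eventually_sequentially by blast
      with N show "\<exists>M. \<forall>n\<ge>M. \<forall>x\<in>U. cdist w x < 1 \<longrightarrow> cdist ((f ^^ k n) x) q < e"
        by blast
    qed simp
    then show "\<exists>r g. strict_mono r \<and> loc_unif_conv U (\<lambda>n. f ^^ k (r n)) g"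
      by (intro exI[of _ id] exI[of _ "\<lambda>_. q"]) (simp add: strict_mono_def)
  qed
  with U show ?thesis unfolding fatou_set_def by blast
qed

lemma sphere_open_vimage:
  assumes cont: "\<And>x. sphere_cont_at f x" and "sphere_open U"
  shows "sphere_open (f -` U)"
  unfolding sphere_open_def
proof
  fix x assume "x \<in> f -` U"
  then obtain e where e: "e > 0" "\<forall>w. cdist (f x) w < e \<longrightarrow> w \<in> U"
    using \<open>sphere_open U\<close> unfolding sphere_open_def by blast
  moreover obtain d where "d > 0" "\<forall>y. cdist x y < d \<longrightarrow> cdist (f x) (f y) < e"
    using cont[of x] e(1) unfolding sphere_cont_at_def by blast
  ultimately show "\<exists>d>0. \<forall>y. cdist x y < d \<longrightarrow> y \<in> f -` U" by auto
qed

lemma loc_unif_conv_vimage: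
  assumes cont: "\<And>x. sphere_cont_at f x" and conv: "loc_unif_conv U F g"
  shows "loc_unif_conv (f -` U) (\<lambda>n x. F n (f x)) (\<lambda>x. g (f x))"
  unfolding loc_unif_conv_def
proof
  fix w assume "w \<in> f -` U"
  then obtain d' where "d' > 0"
    and d': "\<forall>e>0. \<exists>N. \<forall>n\<ge>N. \<forall>x\<in>U. cdist (f w) x < d' \<longrightarrow> cdist (F n x) (g x) < e"
    using conv unfolding loc_unif_conv_def by blast
  obtain d where "d > 0" and d: "\<forall>y. cdist w y < d \<longrightarrow> cdist (f w) (f y) < d'"
    using cont[of w] \<open>d' > 0\<close> unfolding sphere_cont_at_def by blast
  have "\<exists>N. \<forall>n\<ge>N. \<forall>x\<in>f -` U. cdist w x < d \<longrightarrow> cdist (F n (f x)) (g (f x)) < e" if "e > 0" for e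
    using d'[rule_format, OF that] d by auto
  with \<open>d > 0\<close> show "\<exists>d>0. \<forall>e>0. \<exists>N. \<forall>n\<ge>N. \<forall>x\<in>f -` U.
      cdist w x < d \<longrightarrow> cdist (F n (f x)) (g (f x)) < e"
    by blast
qed

lemma loc_unif_conv_eventually_cong:
  assumes "\<forall>\<^sub>F n in sequentially. \<forall>x\<in>U. F n x = G n x" and "loc_unif_conv U F g"
  shows "loc_unif_conv U G g"
proof -
  obtain M where M: "\<forall>n\<ge>M. \<forall>x\<in>U. F n x = G n x"
    using assms(1) unfolding eventually_sequentially by blast
  show ?thesis
    using assms(2) unfolding loc_unif_conv_def
    by (metis (no_types, lifting) M max.bounded_iff)
qed

lemma fatou_pullback:
  assumes cont: "\<And>x. sphere_cont_at f x" and "f v \<in> fatou_set f"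
  shows "v \<in> fatou_set f"
proof -
  obtain U where U: "sphere_open U" "f v \<in> U" "normal_iterates f U"
    using assms(2) unfolding fatou_set_def by blast
  have "normal_iterates f (f -` U)"
  proof (rule normal_iteratesI)
    fix k :: "nat \<Rightarrow> nat" assume k: "filterlim k at_top sequentially"
    obtain r g where r: "strict_mono r" and conv: "loc_unif_conv U (\<lambda>n. f ^^ (k (r n) - 1)) g"
      using U(3) unfolding normal_iterates_def by (rule allE[of _ "\<lambda>n. k n - 1"]) blast
    have "filterlim (\<lambda>n. k (r n)) at_top sequentially"
      using filterlim_compose[OF k filterlim_subseq[OF r]] by (simp add: comp_def)
    then have "\<forall>\<^sub>F n in sequentially. 1 \<le> k (r n)"
      by (simp add: filterlim_at_top)
    then have "\<forall>\<^sub>F n in sequentially. \<forall>x\<in>f -` U. (f ^^ (k (r n) - 1)) (f x) = (f ^^ k (r n)) x"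
    proof (rule eventually_mono)
      fix n assume "1 \<le> k (r n)"
      then have "Suc (k (r n) - 1) = k (r n)" by simp
      then have "f ^^ k (r n) = f ^^ (k (r n) - 1) \<circ> f"
        using funpow_Suc_right[of "k (r n) - 1" f] by simp
      then show "\<forall>x\<in>f -` U. (f ^^ (k (r n) - 1)) (f x) = (f ^^ k (r n)) x" by simp
    qed
    then have "loc_unif_conv (f -` U) (\<lambda>n. f ^^ k (r n)) (\<lambda>x. g (f x))"
      using loc_unif_conv_vimage[OF cont conv] by (rule loc_unif_conv_eventually_cong)
    with r show "\<exists>r g. strict_mono r \<and> loc_unif_conv (f -` U) (\<lambda>n. f ^^ k (r n)) g" by blast
  qed
  with sphere_open_vimage[OF cont U(1)] U(2) show ?thesis
    unfolding fatou_set_def by blast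
qed

lemma orbit_limits_near_uniform_limit:
  assumes cont: "\<And>x. sphere_cont_at f x" and U: "sphere_open U" "x \<in> U"
    and r: "strict_mono r" and conv: "loc_unif_conv U (\<lambda>n. f ^^ r n) g" and "\<epsilon> > 0"
  obtains N \<delta> where "\<delta> > 0"
    and "\<And>y p. cdist x y < \<delta> \<Longrightarrow> orbit_tendsto f y p \<Longrightarrow> cdist ((f ^^ r N) x) p < 4 * \<epsilon>"
proof -
  obtain d where d: "d > 0" "\<forall>e>0. \<exists>N. \<forall>n\<ge>N. \<forall>y\<in>U. cdist x y < d \<longrightarrow> cdist ((f ^^ r n) y) (g y) < e"
    using conv U(2) unfolding loc_unif_conv_def by blast
  obtain N where N: "\<forall>n\<ge>N. \<forall>y\<in>U. cdist x y < d \<longrightarrow> cdist ((f ^^ r n) y) (g y) < \<epsilon>"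
    using d(2) \<open>\<epsilon> > 0\<close> by blast
  obtain dU where dU: "dU > 0" "\<forall>y. cdist x y < dU \<longrightarrow> y \<in> U"
    using U unfolding sphere_open_def by blast
  obtain d1 where d1: "d1 > 0" "\<forall>y. cdist x y < d1 \<longrightarrow> cdist ((f ^^ r N) x) ((f ^^ r N) y) < \<epsilon>"
    using sphere_cont_at_funpow[OF cont, of "r N" x] \<open>\<epsilon> > 0\<close> unfolding sphere_cont_at_def by blast
  show ?thesis
  proof (rule that[of "min d (min dU d1)" N])
    show "min d (min dU d1) > 0" using d(1) dU(1) d1(1) by simp
  next
    fix y p assume y: "cdist x y < min d (min dU d1)" and "orbit_tendsto f y p"
    then obtain M where M: "\<forall>k\<ge>M. cdist ((f ^^ k) y) p < \<epsilon>"
      using \<open>\<epsilon> > 0\<close> unfolding orbit_tendsto_def by blast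
    define n where "n = max N M"
    have "M \<le> r n" using seq_suble[OF r, of n] by (simp add: n_def)
    then have "cdist ((f ^^ r n) y) p < \<epsilon>" using M by blast
    moreover have "y \<in> U" using y dU by simp
    then have "cdist ((f ^^ r N) y) (g y) < \<epsilon>" "cdist (g y) ((f ^^ r n) y) < \<epsilon>"
      using N y by (auto simp: n_def cdist_commute)
    moreover have "cdist ((f ^^ r N) x) ((f ^^ r N) y) < \<epsilon>" using d1 y by simp
    moreover have "cdist ((f ^^ r N) x) p \<le> cdist ((f ^^ r N) x) ((f ^^ r N) y)
        + cdist ((f ^^ r N) y) (g y) + cdist (g y) ((f ^^ r n) y) + cdist ((f ^^ r n) y) p"
      using cdist_triangle[of "(f ^^ r N) x" p "(f ^^ r N) y"] cdist_triangle[of "(f ^^ r N) y" p "g y"]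
        cdist_triangle[of "g y" p "(f ^^ r n) y"] by linarith
    ultimately show "cdist ((f ^^ r N) x) p < 4 * \<epsilon>" by linarith
  qed
qed

lemma not_in_fatou_if_near_two_limits:
  assumes cont: "\<And>x. sphere_cont_at f x" and "pa \<noteq> pb"
    and near_a: "\<And>\<delta>. \<delta> > 0 \<Longrightarrow> \<exists>y. cdist x y < \<delta> \<and> orbit_tendsto f y pa"
    and near_b: "\<And>\<delta>. \<delta> > 0 \<Longrightarrow> \<exists>y. cdist x y < \<delta> \<and> orbit_tendsto f y pb"
  shows "x \<notin> fatou_set f"
proof
  assume "x \<in> fatou_set f"
  then obtain U where U: "sphere_open U" "x \<in> U" "normal_iterates f U"
    unfolding fatou_set_def by blast
  obtain r g where r: "strict_mono r" and conv: "loc_unif_conv U (\<lambda>n. f ^^ r n) g"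
    using U(3) unfolding normal_iterates_def by (auto dest: spec[of _ "\<lambda>n. n"])
  define \<epsilon> where "\<epsilon> = cdist pa pb / 8"
  have "\<epsilon> > 0" using cdist_pos[OF \<open>pa \<noteq> pb\<close>] by (simp add: \<epsilon>_def)
  then obtain N \<delta> where "\<delta> > 0"
    and close: "\<And>y p. cdist x y < \<delta> \<Longrightarrow> orbit_tendsto f y p \<Longrightarrow> cdist ((f ^^ r N) x) p < 4 * \<epsilon>"
    by (rule orbit_limits_near_uniform_limit[OF cont U(1,2) r conv]) blast
  obtain ya yb where "cdist x ya < \<delta>" "orbit_tendsto f ya pa" "cdist x yb < \<delta>" "orbit_tendsto f yb pb"
    using near_a[OF \<open>\<delta> > 0\<close>] near_b[OF \<open>\<delta> > 0\<close>] by blast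
  then have "cdist ((f ^^ r N) x) pa < 4 * \<epsilon>" "cdist ((f ^^ r N) x) pb < 4 * \<epsilon>"
    using close by blast+
  moreover have "cdist pa pb \<le> cdist ((f ^^ r N) x) pa + cdist ((f ^^ r N) x) pb"
    using cdist_triangle[of pa pb "(f ^^ r N) x"] by (simp add: cdist_commute[of pa])
  ultimately have "cdist pa pb < 8 * \<epsilon>" by linarith
  then show False by (simp add: \<epsilon>_def)
qed

section \<open>Contraction towards a point on Apollonius discs\<close>

lemma apollonius_disc_bound:
  fixes a b z :: complex
  assumes "0 \<le> \<rho>" "\<rho> < 1" and "cmod (z - a) \<le> \<rho> * cmod (z - b)"
  shows "cmod (z - a) \<le> \<rho> * cmod (a - b) / (1 - \<rho>)"
proof -
  have "cmod (z - b) \<le> cmod (z - a) + cmod (a - b)"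
    using norm_triangle_ineq[of "z - a" "a - b"] by simp
  then have "cmod (z - a) \<le> \<rho> * (cmod (z - a) + cmod (a - b))"
    using assms(1,3) by (meson mult_left_mono order_trans)
  then show ?thesis
    using assms(2) by (simp add: pos_le_divide_eq algebra_simps)
qed

lemma compact_apollonius_disc:
  fixes a b :: complex
  assumes "0 \<le> \<rho>" "\<rho> < 1"
  shows "compact {z. cmod (z - a) \<le> \<rho> * cmod (z - b)}"
proof -
  have "closed {z. cmod (z - a) \<le> \<rho> * cmod (z - b)}"
    by (intro closed_Collect_le continuous_intros)
  moreover have "{z. cmod (z - a) \<le> \<rho> * cmod (z - b)} \<subseteq> cball a (\<rho> * cmod (a - b) / (1 - \<rho>))"
    using apollonius_disc_bound[OF assms] by (force simp: dist_norm norm_minus_commute)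
  ultimately show ?thesis
    using bounded_subset[OF bounded_cball] by (auto simp: compact_eq_bounded_closed)
qed

text \<open>The hypothesis \<open>step\<close> says that \<open>f\<close> shrinks the ratio \<open>\<bar>z - a\<bar> / \<bar>z - b\<bar>\<close> by the
  factor \<open>q\<close> on the Apollonius disc where this ratio is at most \<open>\<rho>\<close>; it is cross-multiplied so
  that no division by \<open>\<bar>z - b\<bar>\<close> occurs.\<close>

lemma apollonius_contraction_orbit:
  assumes "a \<noteq> b" "0 < \<rho>" "\<rho> < 1" "0 \<le> q" "q < 1"
    and step: "\<And>z. cmod (z - a) \<le> \<rho> * cmod (z - b) \<Longrightarrow>
        \<exists>y. f (Some z) = Some y \<and> cmod (y - a) * cmod (z - b) \<le> q * cmod (z - a) * cmod (y - b)"
    and z: "cmod (z - a) \<le> \<rho> * cmod (z - b)"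
  shows "\<exists>y. (f ^^ n) (Some z) = Some y \<and> cmod (y - a) \<le> \<rho> * q ^ n * cmod (y - b)"
proof (induction n)
  case 0
  then show ?case using z by simp
next
  case (Suc n)
  then obtain y where y: "(f ^^ n) (Some z) = Some y" "cmod (y - a) \<le> \<rho> * q ^ n * cmod (y - b)"
    by blast
  have "\<rho> * q ^ n \<le> \<rho>" using assms(2,4,5) by (simp add: power_le_one)
  then have "cmod (y - a) \<le> \<rho> * cmod (y - b)"
    using y(2) by (meson mult_right_mono norm_ge_zero order_trans)
  then obtain y' where y': "f (Some y) = Some y'"
      "cmod (y' - a) * cmod (y - b) \<le> q * cmod (y - a) * cmod (y' - b)"
    using step by blast
  have "y \<noteq> b" using y(2) \<open>a \<noteq> b\<close> by auto
  have "q * cmod (y - a) * cmod (y' - b) \<le> q * (\<rho> * q ^ n * cmod (y - b)) * cmod (y' - b)"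
    using y(2) assms(4) by (simp add: mult_left_mono mult_right_mono)
  with y'(2) have "cmod (y' - a) * cmod (y - b) \<le> (\<rho> * q ^ Suc n * cmod (y' - b)) * cmod (y - b)"
    by (simp add: algebra_simps)
  then have "cmod (y' - a) \<le> \<rho> * q ^ Suc n * cmod (y' - b)"
    using \<open>y \<noteq> b\<close> by simp
  then show ?case using y(1) y'(1) by simp
qed

lemma apollonius_contraction_uniform:
  assumes "a \<noteq> b" "0 < \<rho>" "\<rho> < 1" "0 \<le> q" "q < 1"
    and step: "\<And>z. cmod (z - a) \<le> \<rho> * cmod (z - b) \<Longrightarrow>
        \<exists>y. f (Some z) = Some y \<and> cmod (y - a) * cmod (z - b) \<le> q * cmod (z - a) * cmod (y - b)"
    and "e > 0"
  shows "\<exists>N. \<forall>n\<ge>N. \<forall>z. cmod (z - a) \<le> \<rho> * cmod (z - b) \<longrightarrow> cdist ((f ^^ n) (Some z)) (Some a) < e"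
proof -
  obtain s where s: "s > 0" "\<forall>y. cmod (y - a) < s \<longrightarrow> cdist (Some a) (Some y) < e"
    using cdist_Some_small[OF \<open>e > 0\<close>] by blast
  define D where "D = \<rho> * cmod (a - b) / (1 - \<rho>)"
  have "D > 0" using assms(1-3) by (simp add: D_def)
  obtain N where N: "q ^ N < s / D"
    using real_arch_pow_inv[of "s / D" q] s(1) \<open>D > 0\<close> assms(4,5) by auto
  have "cdist ((f ^^ n) (Some z)) (Some a) < e"
    if "n \<ge> N" and z: "cmod (z - a) \<le> \<rho> * cmod (z - b)" for n z
  proof -
    obtain y where y: "(f ^^ n) (Some z) = Some y" "cmod (y - a) \<le> \<rho> * q ^ n * cmod (y - b)"
      using apollonius_contraction_orbit[OF assms(1-5) step z] by blast
    have "q ^ n \<le> q ^ N" "q ^ n \<le> 1"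
      using \<open>n \<ge> N\<close> assms(4,5) by (simp_all add: power_decreasing power_le_one)
    moreover have "0 \<le> \<rho> * q ^ n" using assms(2,4) by simp
    moreover have "\<rho> * q ^ n \<le> \<rho>" using assms(2) \<open>q ^ n \<le> 1\<close> by (simp add: mult_left_le)
    ultimately have q: "q ^ n \<le> q ^ N" "0 \<le> \<rho> * q ^ n" "\<rho> * q ^ n < 1" "1 - \<rho> \<le> 1 - \<rho> * q ^ n"
      using assms(3) by linarith+
    have "cmod (y - a) \<le> \<rho> * q ^ n * cmod (a - b) / (1 - \<rho> * q ^ n)"
      using q(2,3) y(2) by (rule apollonius_disc_bound)
    also have "\<dots> \<le> \<rho> * q ^ n * cmod (a - b) / (1 - \<rho>)"
      using assms(2-4) by (intro divide_left_mono[OF q(4)] mult_pos_pos) (use q(3) in auto)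
    also have "\<dots> = q ^ n * D" by (simp add: D_def)
    also have "\<dots> \<le> q ^ N * D" using q(1) \<open>D > 0\<close> by simp
    also have "\<dots> < s" using N \<open>D > 0\<close> by (simp add: pos_less_divide_eq)
    finally have "cdist (Some a) (Some y) < e" using s(2) by blast
    then show ?thesis using y(1) by (simp add: cdist_commute[of "Some a"])
  qed
  then show ?thesis by blast
qed

lemma apollonius_contraction_fatou:
  assumes "a \<noteq> b" "0 < \<rho>" "\<rho> < 1" "0 \<le> q" "q < 1"
    and step: "\<And>z. cmod (z - a) \<le> \<rho> * cmod (z - b) \<Longrightarrow>
        \<exists>y. f (Some z) = Some y \<and> cmod (y - a) * cmod (z - b) \<le> q * cmod (z - a) * cmod (y - b)"
    and w: "cmod (w - a) < \<rho> * cmod (w - b)"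
  shows "Some w \<in> fatou_set f" and "orbit_tendsto f (Some w) (Some a)"
proof -
  define A where "A = {z. cmod (z - a) < \<rho> * cmod (z - b)}"
  have "open A" unfolding A_def by (intro open_Collect_less continuous_intros)
  then have "sphere_open (Some ` A)" by (rule sphere_open_Some_image)
  moreover have "Some w \<in> Some ` A" using w by (simp add: A_def)
  moreover have "\<exists>N. \<forall>n\<ge>N. \<forall>v\<in>Some ` A. cdist ((f ^^ n) v) (Some a) < e" if "e > 0" for e
    using apollonius_contraction_uniform[OF assms(1-5) step that] by (simp add: A_def) (meson less_imp_le)
  ultimately show "Some w \<in> fatou_set f" by (rule fatou_if_uniform_limit)
  show "orbit_tendsto f (Some w) (Some a)"
    using apollonius_contraction_uniform[OF assms(1-5) step] w unfolding orbit_tendsto_def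
    by (meson less_imp_le)
qed

section \<open>Rational maps on the Riemann sphere\<close>

lemma eventually_poly_nonzero_at:
  fixes Q :: "complex poly"
  assumes "Q \<noteq> 0"
  shows "\<forall>\<^sub>F w in at z. poly Q w \<noteq> 0"
proof -
  have "\<not> z islimpt {w. poly Q w = 0}"
    using poly_roots_finite[OF assms] by (rule islimpt_finite)
  then show ?thesis by (simp add: islimpt_iff_eventually)
qed

lemma eventually_poly_nonzero_at_infinity:
  fixes Q :: "complex poly"
  assumes "Q \<noteq> 0"
  shows "\<forall>\<^sub>F w in at_infinity. poly Q w \<noteq> 0"
proof -
  obtain R where "\<forall>w\<in>{w. poly Q w = 0}. norm w \<le> R"
    using finite_imp_bounded[OF poly_roots_finite[OF assms]] unfolding bounded_iff by blast
  then show ?thesis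
    by (intro eventually_at_infinityI[of "R + 1"]) force
qed

lemma filterlim_poly_divide_at_infinity:
  fixes P Q :: "complex poly"
  assumes "degree Q < degree P" "Q \<noteq> 0"
  shows "filterlim (\<lambda>w. poly P w / poly Q w) at_infinity at_infinity"
proof -
  have "P \<noteq> 0" using assms(1) by auto
  have "filterlim (\<lambda>w. poly Q w / poly P w) (at 0) at_infinity"
  proof (rule filterlim_atI)
    show "((\<lambda>w. poly Q w / poly P w) \<longlongrightarrow> 0) at_infinity"
      using assms(1) by (rule poly_divide_tendsto_0_at_infinity)
    show "\<forall>\<^sub>F w in at_infinity. poly Q w / poly P w \<noteq> 0"
      using eventually_poly_nonzero_at_infinity[OF assms(2)]
        eventually_poly_nonzero_at_infinity[OF \<open>P \<noteq> 0\<close>] by eventually_elim simp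
  qed
  then show ?thesis
    by (simp add: filterlim_inverse_at_iff[symmetric])
qed

lemma rat_ext_Some:
  "rat_ext P Q (Some z) = (if poly Q z = 0 then None else Some (poly P z / poly Q z))"
  by (simp add: rat_ext_def)

lemma poly_nonzero_at_root_if_coprime:
  fixes P Q :: "'a::field poly"
  assumes "coprime P Q" and "poly Q z = 0"
  shows "poly P z \<noteq> 0"
proof
  assume "poly P z = 0"
  with assms(2) have "[:-z, 1:] dvd P" "[:-z, 1:] dvd Q" by (simp_all add: poly_eq_0_iff_dvd)
  with assms(1) have "is_unit [:-z, 1:]" by (rule coprime_common_divisor)
  then show False by (simp add: is_unit_poly_iff)
qed

lemma filterlim_poly_divide_at_root:
  fixes P Q :: "complex poly"
  assumes "Q \<noteq> 0" "poly Q z = 0" "poly P z \<noteq> 0"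
  shows "filterlim (\<lambda>w. poly P w / poly Q w) at_infinity (at z)"
proof (rule filterlim_divide_at_infinity)
  show "(poly P \<longlongrightarrow> poly P z) (at z)"
    using poly_isCont[where p = P and x = z] by (simp add: isCont_def)
  show "filterlim (poly Q) (at 0) (at z)"
    using poly_isCont[where p = Q and x = z] assms(2) eventually_poly_nonzero_at[OF assms(1)]
    by (intro filterlim_atI) (simp_all add: isCont_def)
qed fact

lemma sphere_cont_at_rat_ext:
  fixes P Q :: "complex poly"
  assumes "coprime P Q" "Q \<noteq> 0" "degree Q < degree P"
  shows "sphere_cont_at (rat_ext P Q) x"
proof (cases x)
  case None
  have "\<forall>\<^sub>F w in at_infinity. rat_ext P Q (Some w) = Some (poly P w / poly Q w)"
    using eventually_poly_nonzero_at_infinity[OF assms(2)] by eventually_elim (simp add: rat_ext_Some)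
  with assms(2,3) show ?thesis
    unfolding None
    by (intro sphere_cont_at_None[where g = "\<lambda>w. poly P w / poly Q w"] filterlim_poly_divide_at_infinity)
      (simp_all add: rat_ext_def)
next
  case (Some z)
  show ?thesis
  proof (cases "poly Q z = 0")
    case True
    have "\<forall>\<^sub>F w in at z. rat_ext P Q (Some w) = Some (poly P w / poly Q w)"
      using eventually_poly_nonzero_at[OF assms(2)] by eventually_elim (simp add: rat_ext_Some)
    with True show ?thesis
      unfolding Some
      using filterlim_poly_divide_at_root[OF assms(2) True poly_nonzero_at_root_if_coprime[OF assms(1) True]]
      by (intro sphere_cont_at_pole) (simp_all add: rat_ext_Some)
  next
    case False
    have "\<forall>\<^sub>F w in nhds z. poly Q w \<noteq> 0"
      using poly_isCont[where p = Q and x = z] False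
      unfolding isCont_def tendsto_at_iff_tendsto_nhds by (rule tendsto_imp_eventually_ne)
    then have "\<forall>\<^sub>F w in nhds z. rat_ext P Q (Some w) = Some (poly P w / poly Q w)"
      by eventually_elim (simp add: rat_ext_Some)
    then show ?thesis
      unfolding Some using False by (intro sphere_cont_at_Some continuous_intros) auto
  qed
qed

lemma rat_ext_smult:
  "u \<noteq> 0 \<Longrightarrow> rat_ext (smult u P) (smult u Q) = rat_ext P Q"
  by (auto simp: rat_ext_def fun_eq_iff split: option.split)

lemma rat_ext_cancel_common_factor:
  fixes A B D :: "complex poly"
  assumes "D \<noteq> 0" "coprime A B"
  shows "rat_ext ((D * A) div gcd (D * A) (D * B)) ((D * B) div gcd (D * A) (D * B)) = rat_ext A B"
proof -
  have gcd: "gcd (D * A) (D * B) = normalize D"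
    using assms(2) by (simp add: gcd_mult_left)
  define u where "u = lead_coeff D"
  have "u \<noteq> 0" using assms(1) by (simp add: u_def)
  have D: "D = normalize D * [:u:]"
    using normalize_mult_unit_factor[of D] assms(1)
    by (simp add: u_def unit_factor_poly_def unit_factor_complex_def mult.commute)
  have "normalize D \<noteq> 0" using assms(1) by simp
  have DX: "D * X = normalize D * smult u X" for X
    by (subst D) (simp add: mult.assoc)
  have "(D * X) div normalize D = smult u X" for X
    unfolding DX using \<open>normalize D \<noteq> 0\<close> by (rule nonzero_mult_div_cancel_left)
  then show ?thesis
    unfolding gcd using rat_ext_smult[OF \<open>u \<noteq> 0\<close>] by simp
qed

section \<open>The relaxed Newton map of a polynomial with two roots\<close>

definition two_root_den :: "complex \<Rightarrow> complex \<Rightarrow> nat \<Rightarrow> nat \<Rightarrow> complex poly" where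
  "two_root_den a b m n = smult (of_nat m) [:-b, 1:] + smult (of_nat n) [:-a, 1:]"

definition two_root_num :: "complex \<Rightarrow> complex \<Rightarrow> nat \<Rightarrow> nat \<Rightarrow> complex \<Rightarrow> complex poly" where
  "two_root_num a b m n h = [:0, 1:] * two_root_den a b m n - smult h ([:-a, 1:] * [:-b, 1:])"

lemma poly_two_root_den [simp]:
  "poly (two_root_den a b m n) z = of_nat m * (z - b) + of_nat n * (z - a)"
  by (simp add: two_root_den_def algebra_simps)

lemma poly_two_root_num [simp]:
  "poly (two_root_num a b m n h) z = z * (of_nat m * (z - b) + of_nat n * (z - a)) - h * (z - a) * (z - b)"
  by (simp add: two_root_num_def algebra_simps)

lemma two_root_den_swap: "two_root_den b a n m = two_root_den a b m n"
  by (simp add: two_root_den_def add.commute)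

lemma two_root_num_swap: "two_root_num b a n m h = two_root_num a b m n h"
  by (simp add: two_root_num_def two_root_den_swap mult.commute)

lemma two_root_poly_decompose:
  fixes p :: "complex poly"
  assumes "p \<noteq> 0" "a \<noteq> b" "{z. poly p z = 0} = {a, b}"
  shows "p = smult (lead_coeff p) ([:-a, 1:] ^ order a p * [:-b, 1:] ^ order b p)"
  using complex_poly_decompose[of p] assms by simp

text \<open>With \<open>p = c (z - a)\<^sup>m (z - b)\<^sup>n\<close> we have \<open>p' = D \<cdot> two_root_den\<close> and
  \<open>z p' - h p = D \<cdot> two_root_num\<close> for \<open>D = c (z - a)\<^sup>m\<^sup>-\<^sup>1 (z - b)\<^sup>n\<^sup>-\<^sup>1\<close>, so in lowest
  terms the relaxed Newton map is \<open>two_root_num / two_root_den\<close>.\<close>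

lemma relaxed_newton_two_roots:
  fixes p :: "complex poly" and a b h :: complex
  defines "m \<equiv> order a p" and "n \<equiv> order b p"
  assumes "p \<noteq> 0" "a \<noteq> b" "{z. poly p z = 0} = {a, b}"
    and "coprime (two_root_num a b m n h) (two_root_den a b m n)"
  shows "relaxed_newton h p = rat_ext (two_root_num a b m n h) (two_root_den a b m n)"
proof -
  have "m > 0" "n > 0"
    using assms(3,5) order_root[of p a] order_root[of p b] by (auto simp: m_def n_def)
  then obtain m' n' where m': "m = Suc m'" and n': "n = Suc n'"
    using gr0_implies_Suc by blast
  define D where "D = smult (lead_coeff p) ([:-a, 1:] ^ m' * [:-b, 1:] ^ n')"
  have D0: "D \<noteq> 0" using assms(3) by (simp add: D_def)
  have p: "p = smult (lead_coeff p) ([:-a, 1:] ^ m * [:-b, 1:] ^ n)"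
    unfolding m_def n_def using assms(3-5) by (rule two_root_poly_decompose)
  have p_D: "p = D * ([:-a, 1:] * [:-b, 1:])"
    by (subst p) (simp only: D_def m' n' power_Suc mult_smult_left mult_smult_right mult_ac)
  have dXa: "pderiv ([:-a, 1:] ^ m) = smult (of_nat m) ([:-a, 1:] ^ m')"
    unfolding m' pderiv_power_Suc by (simp add: pderiv_pCons)
  have dXb: "pderiv ([:-b, 1:] ^ n) = smult (of_nat n) ([:-b, 1:] ^ n')"
    unfolding n' pderiv_power_Suc by (simp add: pderiv_pCons)
  have "pderiv p = smult (lead_coeff p)
      ([:-a, 1:] ^ m * pderiv ([:-b, 1:] ^ n) + [:-b, 1:] ^ n * pderiv ([:-a, 1:] ^ m))"
    by (subst p) (simp only: pderiv_smult pderiv_mult)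
  also have "\<dots> = D * two_root_den a b m n"
    unfolding dXa dXb poly_eq_poly_eq_iff[symmetric] by (simp add: fun_eq_iff D_def m' n' algebra_simps)
  finally have dp_D: "pderiv p = D * two_root_den a b m n" .
  have "[:0, 1:] * pderiv p - smult h p = D * two_root_num a b m n h"
    unfolding dp_D poly_eq_poly_eq_iff[symmetric] by (subst p_D) (simp add: fun_eq_iff algebra_simps)
  then show ?thesis
    unfolding relaxed_newton_def Let_def dp_D
    using rat_ext_cancel_common_factor[OF D0 assms(6)] by simp
qed

locale two_root_newton =
  fixes a b :: complex and m n :: nat and h :: complex
  assumes roots_distinct: "a \<noteq> b" and mult_pos: "0 < m" "0 < n"
    and h_nonzero: "h \<noteq> 0" and h_ne_degree: "h \<noteq> of_nat (m + n)"
begin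

abbreviation "num \<equiv> two_root_num a b m n h"
abbreviation "den \<equiv> two_root_den a b m n"
abbreviation "N \<equiv> rat_ext num den"

definition pole :: complex where
  "pole = (of_nat m * b + of_nat n * a) / of_nat (m + n)"

lemma of_nat_mult_sum_nonzero: "(of_nat m + of_nat n :: complex) \<noteq> 0"
  using mult_pos by (metis add_is_0 of_nat_add of_nat_eq_0_iff not_gr0)

lemma den_eq_linear: "den = [:- (of_nat m * b + of_nat n * a), of_nat (m + n):]"
  by (simp add: two_root_den_def algebra_simps)

lemma den_root_iff: "poly den z = 0 \<longleftrightarrow> z = pole"
  using of_nat_mult_sum_nonzero by (auto simp: pole_def den_eq_linear field_simps)

lemma num_pole_nonzero: "poly num pole \<noteq> 0"
proof -
  have "pole \<noteq> a" "pole \<noteq> b"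
    using den_root_iff[of a] den_root_iff[of b] roots_distinct mult_pos by auto
  with den_root_iff[of pole] h_nonzero show ?thesis by simp
qed

lemma degree_den: "degree den = 1"
  using of_nat_mult_sum_nonzero by (simp add: den_eq_linear)

lemma degree_num: "degree num = 2"
proof -
  have "num = [:a * b * - h, h * (a + b) - (of_nat m * b + of_nat n * a), of_nat (m + n) - h:]"
    by (simp add: two_root_num_def den_eq_linear algebra_simps)
  then show ?thesis using h_ne_degree by simp
qed

lemma coprime_num_den: "coprime num den"
proof -
  have "prime_elem den"
    unfolding den_eq_linear using of_nat_mult_sum_nonzero by (intro prime_elem_linear_field_poly) simp
  moreover have "\<not> den dvd num"
    using num_pole_nonzero den_root_iff[of pole] by (metis dvd_def mult_eq_0_iff poly_mult)
  ultimately show ?thesis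
    by (simp add: prime_elem_imp_coprime coprime_commute)
qed

lemma sphere_cont_at_N: "sphere_cont_at N x"
  using coprime_num_den degree_num degree_den
  by (intro sphere_cont_at_rat_ext) auto

lemma N_Some:
  "poly den z \<noteq> 0 \<Longrightarrow> N (Some z) = Some (z - h * (z - a) * (z - b) / poly den z)"
  by (simp add: rat_ext_Some field_simps)

lemma swap: "two_root_newton b a n m h"
  using roots_distinct mult_pos h_nonzero h_ne_degree by unfold_locales (auto simp: add.commute)

lemma N_swap: "rat_ext (two_root_num b a n m h) (two_root_den b a n m) = N"
  by (simp add: two_root_num_swap two_root_den_swap)

end

section \<open>Basins of the roots\<close>

lemma norm_sq_diff_eq_Re: "(cmod u)\<^sup>2 - (cmod w)\<^sup>2 = Re ((u - w) * cnj (u + w))"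
  unfolding cmod_power2 by (simp add: power2_eq_square algebra_simps)

context two_root_newton
begin

text \<open>\<open>N(z) - a = (z - a) \<cdot> factor_a z / den(z)\<close> and \<open>N(z) - b = (z - b) \<cdot> factor_b z / den(z)\<close>.\<close>

definition factor_a :: "complex \<Rightarrow> complex" where
  "factor_a z = (of_nat m - h) * (z - b) + of_nat n * (z - a)"

definition factor_b :: "complex \<Rightarrow> complex" where
  "factor_b z = of_nat m * (z - b) + (of_nat n - h) * (z - a)"

lemma N_ratio_step:
  assumes "poly den z \<noteq> 0" and "cmod (factor_a z) \<le> q * cmod (factor_b z)"
  shows "\<exists>y. N (Some z) = Some y \<and> cmod (y - a) * cmod (z - b) \<le> q * cmod (z - a) * cmod (y - b)"
proof -
  define y where "y = z - h * (z - a) * (z - b) / poly den z"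
  have ya: "y - a = (z - a) * factor_a z / poly den z"
    and yb: "y - b = (z - b) * factor_b z / poly den z"
    using assms(1) by (simp_all add: y_def factor_a_def factor_b_def field_simps)
  have "cmod (y - a) * cmod (z - b) = cmod (z - a) * cmod (z - b) / cmod (poly den z) * cmod (factor_a z)"
    by (simp add: ya norm_mult norm_divide)
  also have "\<dots> \<le> cmod (z - a) * cmod (z - b) / cmod (poly den z) * (q * cmod (factor_b z))"
    using assms(2) by (rule mult_left_mono) simp
  also have "\<dots> = q * cmod (z - a) * cmod (y - b)"
    by (simp add: yb norm_mult norm_divide)
  finally show ?thesis using N_Some[OF assms(1)] by (simp add: y_def)
qed

lemma fatou_if_factor_contracts:
  assumes "0 < \<rho>" "\<rho> < 1"
    and contr: "\<And>z. cmod (z - a) \<le> \<rho> * cmod (z - b) \<Longrightarrow>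
        poly den z \<noteq> 0 \<and> cmod (factor_a z) < cmod (factor_b z)"
    and w: "cmod (w - a) < \<rho> * cmod (w - b)"
  shows "Some w \<in> fatou_set N" and "orbit_tendsto N (Some w) (Some a)"
proof -
  define S where "S = {z. cmod (z - a) \<le> \<rho> * cmod (z - b)}"
  have "compact S"
    unfolding S_def using assms(1,2) by (intro compact_apollonius_disc) auto
  define \<phi> where "\<phi> z = cmod (factor_a z) / cmod (factor_b z)" for z
  have fb: "factor_b z \<noteq> 0" if "z \<in> S" for z
    using contr[of z] that by (auto simp: S_def)
  have "continuous_on S \<phi>"
    using fb unfolding \<phi>_def factor_a_def factor_b_def by (intro continuous_intros) auto
  moreover have "a \<in> S" using assms(1) by (simp add: S_def)
  ultimately obtain x where x: "x \<in> S" "\<forall>z\<in>S. \<phi> z \<le> \<phi> x"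
    using continuous_attains_sup[OF \<open>compact S\<close>] by blast
  define q where "q = \<phi> x"
  have q: "0 \<le> q" "q < 1"
    using contr[of x] x(1) by (auto simp: q_def \<phi>_def S_def divide_less_eq)
  have "\<exists>y. N (Some z) = Some y \<and> cmod (y - a) * cmod (z - b) \<le> q * cmod (z - a) * cmod (y - b)"
    if "cmod (z - a) \<le> \<rho> * cmod (z - b)" for z
  proof (rule N_ratio_step)
    have "z \<in> S" using that by (simp add: S_def)
    then show "cmod (factor_a z) \<le> q * cmod (factor_b z)"
      using x(2) fb by (auto simp: q_def \<phi>_def divide_le_eq)
  qed (use contr that in blast)
  then show "Some w \<in> fatou_set N" "orbit_tendsto N (Some w) (Some a)"
    using apollonius_contraction_fatou[OF roots_distinct assms(1,2) q _ w] by blast+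
qed

text \<open>The multiplier of \<open>N\<close> at the root \<open>a\<close> is \<open>1 - h / m = factor_a a / factor_b a\<close>.\<close>

lemma root_in_fatou:
  assumes "cmod (h - of_nat m) < of_nat m"
  shows "Some a \<in> fatou_set N"
proof -
  define C where "C = {z. poly den z \<noteq> 0 \<and> cmod (factor_a z) < cmod (factor_b z)}"
  have "open C"
    unfolding C_def factor_a_def factor_b_def poly_two_root_den
    by (intro open_Collect_conj open_Collect_neq open_Collect_less continuous_intros)
  moreover have "a \<in> C"
    using assms roots_distinct mult_pos
    by (simp add: C_def factor_a_def factor_b_def norm_mult norm_minus_commute)
  ultimately obtain s where "s > 0" "ball a s \<subseteq> C"
    by (meson openE)
  define \<rho> where "\<rho> = min (1/2) (s / (4 * cmod (a - b)))"
  have \<rho>: "0 < \<rho>" "\<rho> \<le> 1/2"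
    using \<open>s > 0\<close> roots_distinct by (auto simp: \<rho>_def)
  have "z \<in> C" if "cmod (z - a) \<le> \<rho> * cmod (z - b)" for z
  proof -
    have "cmod (z - a) \<le> \<rho> * cmod (a - b) / (1 - \<rho>)"
      using apollonius_disc_bound[OF _ _ that] \<rho> by simp
    also have "\<dots> \<le> 2 * \<rho> * cmod (a - b)"
      using \<rho> mult_right_mono[of "\<rho> * 2" 1 "cmod (a - b)"] by (simp add: divide_le_eq algebra_simps)
    also have "\<dots> < s"
      using \<open>s > 0\<close> roots_distinct by (simp add: \<rho>_def min_def field_simps)
    finally show ?thesis using \<open>ball a s \<subseteq> C\<close> by (auto simp: dist_norm norm_minus_commute)
  qed
  moreover have "cmod (a - a) < \<rho> * cmod (a - b)" using \<rho> roots_distinct by simp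
  ultimately show ?thesis
    using fatou_if_factor_contracts[of \<rho> a] \<rho> by (auto simp: C_def)
qed

lemma factor_norm_diff:
  assumes "m = n" and "h = of_real r"
  shows "(cmod (factor_a z))\<^sup>2 - (cmod (factor_b z))\<^sup>2
    = r * (2 * real m - r) * ((cmod (z - a))\<^sup>2 - (cmod (z - b))\<^sup>2)"
proof -
  have "factor_a z - factor_b z = h * (b - a)"
    and "factor_a z + factor_b z = (2 * of_nat m - h) * ((z - a) + (z - b))"
    unfolding factor_a_def factor_b_def by (simp_all add: assms(1) algebra_simps)
  then have "(cmod (factor_a z))\<^sup>2 - (cmod (factor_b z))\<^sup>2
      = Re (h * (b - a) * cnj ((2 * of_nat m - h) * ((z - a) + (z - b))))"
    by (simp add: norm_sq_diff_eq_Re)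
  also have "\<dots> = r * (2 * real m - r) * Re (((z - a) - (z - b)) * cnj ((z - a) + (z - b)))"
    by (simp add: assms(2) algebra_simps)
  finally show ?thesis by (simp add: norm_sq_diff_eq_Re)
qed

lemma half_plane_in_fatou:
  assumes "m = n" "h = of_real r" "0 < r" "r < 2 * real m"
    and w: "cmod (w - a) < cmod (w - b)"
  shows "Some w \<in> fatou_set N" and "orbit_tendsto N (Some w) (Some a)"
proof -
  have "w \<noteq> b" using w by auto
  define \<rho> where "\<rho> = (cmod (w - a) / cmod (w - b) + 1) / 2"
  have \<rho>: "0 < \<rho>" "\<rho> < 1" and w\<rho>: "cmod (w - a) < \<rho> * cmod (w - b)"
    using w \<open>w \<noteq> b\<close> by (auto simp: \<rho>_def field_simps add_nonneg_pos)
  have "poly den z \<noteq> 0 \<and> cmod (factor_a z) < cmod (factor_b z)"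
    if z: "cmod (z - a) \<le> \<rho> * cmod (z - b)" for z
  proof
    have "z \<noteq> b" using z roots_distinct \<rho> by auto
    then have "\<rho> * cmod (z - b) < cmod (z - b)" using \<rho> by simp
    with z have closer: "cmod (z - a) < cmod (z - b)" by linarith
    show "poly den z \<noteq> 0"
    proof
      assume "poly den z = 0"
      then have "of_nat m * ((z - a) + (z - b)) = 0"
        using assms(1) by (simp add: algebra_simps)
      then have "(z - a) + (z - b) = 0" using mult_pos by simp
      then have "- (z - a) = z - b" by (rule minus_unique)
      then show False using closer by (metis norm_minus_cancel less_irrefl)
    qed
    have "(cmod (z - a))\<^sup>2 - (cmod (z - b))\<^sup>2 < 0" using closer by (simp add: power_strict_mono)
    moreover have "0 < r * (2 * real m - r)" using assms(3,4) by simp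
    ultimately have "r * (2 * real m - r) * ((cmod (z - a))\<^sup>2 - (cmod (z - b))\<^sup>2) < 0"
      by (rule mult_pos_neg[rotated])
    then have "(cmod (factor_a z))\<^sup>2 < (cmod (factor_b z))\<^sup>2"
      using factor_norm_diff[OF assms(1,2), of z] by linarith
    then show "cmod (factor_a z) < cmod (factor_b z)"
      by (simp add: power_less_imp_less_base)
  qed
  then show "Some w \<in> fatou_set N" "orbit_tendsto N (Some w) (Some a)"
    using fatou_if_factor_contracts[OF \<rho>] w\<rho> by blast+
qed

end

section \<open>The perpendicular bisector as Julia set\<close>

lemma norm_plus_half_eq_norm_minus_half_iff: "cmod (w + 1/2) = cmod (w - 1/2) \<longleftrightarrow> Re w = 0"
proof -
  have "cmod (w + 1/2) = cmod (w - 1/2) \<longleftrightarrow> (cmod (w + 1/2))\<^sup>2 = (cmod (w - 1/2))\<^sup>2"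
    by (simp add: power2_eq_iff_nonneg)
  also have "\<dots> \<longleftrightarrow> Re w = 0"
    unfolding cmod_power2 by (simp add: power2_eq_square algebra_simps)
  finally show ?thesis .
qed

lemma perpendicular_bisector_eq_line:
  fixes a b :: complex
  assumes "a \<noteq> b"
  shows "{z. cmod (z - a) = cmod (z - b)} = {(a + b) / 2 + of_real t * (\<i> * (b - a)) |t. True}"
proof -
  have ab: "b - a \<noteq> 0" using assms by simp
  have "cmod (z - a) = cmod (z - b) \<longleftrightarrow> Re ((z - (a + b) / 2) / (b - a)) = 0" for z
  proof -
    define w where "w = (z - (a + b) / 2) / (b - a)"
    have "z - a = (b - a) * (w + 1/2)" "z - b = (b - a) * (w - 1/2)"
      using ab by (simp_all add: w_def field_simps)
    then show ?thesis
      using ab norm_plus_half_eq_norm_minus_half_iff[of w] by (simp add: norm_mult w_def)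
  qed
  moreover have "Re ((z - (a + b) / 2) / (b - a)) = 0 \<longleftrightarrow> (\<exists>t. z = (a + b) / 2 + of_real t * (\<i> * (b - a)))" for z
  proof
    assume "Re ((z - (a + b) / 2) / (b - a)) = 0"
    then have "(z - (a + b) / 2) / (b - a) = of_real (Im ((z - (a + b) / 2) / (b - a))) * \<i>"
      by (simp add: complex_eq_iff)
    then show "\<exists>t. z = (a + b) / 2 + of_real t * (\<i> * (b - a))"
      using ab by (intro exI[of _ "Im ((z - (a + b) / 2) / (b - a))"]) (simp add: field_simps)
  qed (use ab in auto)
  ultimately show ?thesis by auto
qed

lemma bisector_shift_closer:
  assumes "cmod (z - a) = cmod (z - b)" "a \<noteq> b" "0 < s"
  shows "cmod (z - of_real s * (b - a) - a) < cmod (z - of_real s * (b - a) - b)"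
proof -
  obtain t where z: "z = (a + b) / 2 + of_real t * (\<i> * (b - a))"
    using assms(1,2) perpendicular_bisector_eq_line by blast
  define u where "u = Complex (- s) t"
  have "z - of_real s * (b - a) - a = (b - a) * (u + 1/2)"
    "z - of_real s * (b - a) - b = (b - a) * (u - 1/2)"
    unfolding z u_def Complex_eq by (simp_all add: algebra_simps diff_divide_distrib add_divide_distrib)
  moreover have "cmod (u + 1/2) < cmod (u - 1/2)"
    using assms(3) by (simp add: u_def cmod_def power2_eq_square algebra_simps)
  ultimately show ?thesis using assms(2) by (simp add: norm_mult)
qed

lemma near_bisector_closer_point:
  assumes "a \<noteq> b" and x: "x \<in> insert None (Some ` {z. cmod (z - a) = cmod (z - b)})" and "\<delta> > 0"
  shows "\<exists>y. cdist x (Some y) < \<delta> \<and> cmod (y - a) < cmod (y - b)"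
proof (cases x)
  case None
  obtain R where R: "\<forall>w. R \<le> cmod w \<longrightarrow> cdist None (Some w) < \<delta>"
    using eventually_cdist_None_at_infinity[OF \<open>\<delta> > 0\<close>] unfolding eventually_at_infinity by blast
  define c where "c = (a + b) / 2"
  define s where "s = (\<bar>R\<bar> + cmod c) / cmod (b - a) + 1"
  have "s > 0" using assms(1) by (simp add: s_def add_nonneg_pos)
  have "cmod (c - of_real s * (b - a)) \<ge> s * cmod (b - a) - cmod c"
    using norm_triangle_ineq2[of "of_real s * (b - a)" c] \<open>s > 0\<close>
    by (simp add: norm_mult norm_minus_commute)
  also have "s * cmod (b - a) = \<bar>R\<bar> + cmod c + cmod (b - a)"
    using assms(1) by (simp add: s_def field_simps)
  then have "s * cmod (b - a) - cmod c \<ge> R"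
    using abs_ge_self[of R] norm_ge_zero[of "b - a"] by linarith
  finally have "cdist None (Some (c - of_real s * (b - a))) < \<delta>" using R by auto
  moreover have "cmod (c - a) = cmod (c - b)"
    by (simp add: c_def norm_minus_commute field_simps)
  ultimately show ?thesis
    using None bisector_shift_closer[OF _ assms(1) \<open>s > 0\<close>] by blast
next
  case (Some z)
  then have z: "cmod (z - a) = cmod (z - b)" using x by auto
  obtain d where d: "d > 0" "\<forall>w. cmod (w - z) < d \<longrightarrow> cdist (Some z) (Some w) < \<delta>"
    using cdist_Some_small[OF \<open>\<delta> > 0\<close>] by blast
  define s where "s = d / (2 * cmod (b - a))"
  have "s > 0" using d(1) assms(1) by (simp add: s_def)
  have "cmod (z - of_real s * (b - a) - z) = s * cmod (b - a)"
    using \<open>s > 0\<close> by (simp add: norm_mult)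
  also have "\<dots> < d"
    using d(1) assms(1) by (simp add: s_def)
  finally have "cmod (z - of_real s * (b - a) - z) < d" .
  then show ?thesis
    using Some d(2) bisector_shift_closer[OF z assms(1) \<open>s > 0\<close>] by blast
qed

context two_root_newton
begin

lemma julia_set_eq_bisector:
  assumes "m = n" "h = of_real r" "0 < r" "r < 2 * real m"
  shows "julia_set N = insert None (Some ` {z. cmod (z - a) = cmod (z - b)})"
proof -
  interpret swapped: two_root_newton b a n m h by (rule swap)
  have fatou_a: "Some w \<in> fatou_set N" "orbit_tendsto N (Some w) (Some a)"
    if "cmod (w - a) < cmod (w - b)" for w
    using half_plane_in_fatou[OF assms that] by blast+
  have fatou_b: "Some w \<in> fatou_set N" "orbit_tendsto N (Some w) (Some b)"
    if "cmod (w - b) < cmod (w - a)" for w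
    using swapped.half_plane_in_fatou[OF assms(1)[symmetric] assms(2,3) _ that] assms(1,4)
    unfolding N_swap by auto
  show ?thesis
  proof (intro set_eqI iffI)
    fix x assume x: "x \<in> julia_set N"
    show "x \<in> insert None (Some ` {z. cmod (z - a) = cmod (z - b)})"
    proof (cases x)
      case (Some z)
      then have "\<not> cmod (z - a) < cmod (z - b)" "\<not> cmod (z - b) < cmod (z - a)"
        using x fatou_a(1) fatou_b(1) by (auto simp: julia_set_def)
      then show ?thesis using Some by simp
    qed simp
  next
    fix x assume x: "x \<in> insert None (Some ` {z. cmod (z - a) = cmod (z - b)})"
    have x': "x \<in> insert None (Some ` {z. cmod (z - b) = cmod (z - a)})"
      using x by (simp add: eq_commute)
    have "x \<notin> fatou_set N"
    proof (rule not_in_fatou_if_near_two_limits[OF sphere_cont_at_N])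
      show "Some a \<noteq> Some b" using roots_distinct by simp
    next
      fix \<delta> :: real assume "\<delta> > 0"
      then show "\<exists>y. cdist x y < \<delta> \<and> orbit_tendsto N y (Some a)"
        using near_bisector_closer_point[OF roots_distinct x] fatou_a(2) by blast
    next
      fix \<delta> :: real assume "\<delta> > 0"
      then show "\<exists>y. cdist x y < \<delta> \<and> orbit_tendsto N y (Some b)"
        using near_bisector_closer_point[OF roots_distinct[symmetric] x'] fatou_b(2) by blast
    qed
    then show "x \<in> julia_set N" by (simp add: julia_set_def)
  qed
qed

end

section \<open>Julia sets that are lines\<close>

lemma poly_eq_0_if_zero_on_reals:
  fixes P Q :: "complex poly"
  assumes "Q \<noteq> 0" and zero: "\<And>t::real. poly Q (of_real t) \<noteq> 0 \<Longrightarrow> poly P (of_real t) = 0"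
  shows "P = 0"
proof (rule ccontr)
  assume "P \<noteq> 0"
  then have "finite {z. poly (P * Q) z = 0}"
    using assms(1) by (intro poly_roots_finite) simp
  moreover have "range (of_real :: real \<Rightarrow> complex) \<subseteq> {z. poly (P * Q) z = 0}"
    using zero by auto
  moreover have "infinite (range (of_real :: real \<Rightarrow> complex))"
    using infinite_UNIV_char_0[where 'a = real] finite_imageD[of of_real "UNIV :: real set"]
    by (auto simp: inj_on_def)
  ultimately show False using finite_subset by blast
qed

lemma conj_identity_if_real_quotient:
  fixes A B :: "complex poly"
  assumes "B \<noteq> 0"
    and real: "\<And>t::real. poly B (of_real t) \<noteq> 0 \<Longrightarrow> poly A (of_real t) / poly B (of_real t) \<in> \<real>"
  shows "poly A x * cnj (poly B (cnj x)) = cnj (poly A (cnj x)) * poly B x"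
proof -
  define P where "P = A * map_poly cnj B - map_poly cnj A * B"
  have "P = 0"
  proof (rule poly_eq_0_if_zero_on_reals[OF assms(1)])
    fix t :: real assume Bt: "poly B (of_real t) \<noteq> 0"
    then have "cnj (poly A (of_real t) / poly B (of_real t)) = poly A (of_real t) / poly B (of_real t)"
      using real by (metis Reals_cnj_iff)
    with Bt show "poly P (of_real t) = 0"
      by (simp add: P_def field_simps)
  qed
  then have "poly P x = 0" by simp
  then show ?thesis by (simp add: P_def)
qed

text \<open>The hypothesis \<open>real\<close> is the invariance of the real axis under the Newton map in
  coordinates where the Julia line is the real axis. Evaluating the resulting conjugation identity
  at \<open>\<alpha>\<close> forces \<open>\<beta> = cnj \<alpha>\<close>; evaluating it at \<open>0\<close> and \<open>1\<close> then gives \<open>h = cnj h\<close> and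
  \<open>m = n\<close>.\<close>

lemma equal_mult_real_if_real_on_reals:
  fixes \<alpha> \<beta> h :: complex and m n :: nat
  assumes "0 < m" "h \<noteq> 0" "\<alpha> \<noteq> \<beta>" "\<alpha> \<notin> \<real>"
    and real: "\<And>t::real. poly (two_root_den \<alpha> \<beta> m n) (of_real t) \<noteq> 0 \<Longrightarrow>
        h * (of_real t - \<alpha>) * (of_real t - \<beta>) / poly (two_root_den \<alpha> \<beta> m n) (of_real t) \<in> \<real>"
  shows "m = n \<and> h \<in> \<real>"
proof -
  define D D' where "D x = of_nat m * (x - \<beta>) + of_nat n * (x - \<alpha>)"
    and "D' x = of_nat m * (x - cnj \<beta>) + of_nat n * (x - cnj \<alpha>)" for x
  have "poly (two_root_den \<alpha> \<beta> m n) \<alpha> \<noteq> 0" using assms(1,3) by simp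
  then have "two_root_den \<alpha> \<beta> m n \<noteq> 0" by (metis poly_0)
  have A: "poly (smult h ([:-\<alpha>, 1:] * [:-\<beta>, 1:])) z = h * (z - \<alpha>) * (z - \<beta>)" for z
    by (simp add: algebra_simps)
  have "poly (smult h ([:-\<alpha>, 1:] * [:-\<beta>, 1:])) x * cnj (poly (two_root_den \<alpha> \<beta> m n) (cnj x))
      = cnj (poly (smult h ([:-\<alpha>, 1:] * [:-\<beta>, 1:])) (cnj x)) * poly (two_root_den \<alpha> \<beta> m n) x" for x
  proof (rule conj_identity_if_real_quotient)
    show "poly (smult h ([:-\<alpha>, 1:] * [:-\<beta>, 1:])) (of_real t) / poly (two_root_den \<alpha> \<beta> m n) (of_real t) \<in> \<real>"
      if "poly (two_root_den \<alpha> \<beta> m n) (of_real t) \<noteq> 0" for t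
      unfolding A using real[OF that] .
  qed fact
  then have id: "h * (x - \<alpha>) * (x - \<beta>) * D' x = cnj h * (x - cnj \<alpha>) * (x - cnj \<beta>) * D x" for x
    unfolding A by (simp add: D_def D'_def mult_ac)
  have "\<alpha> \<noteq> cnj \<alpha>" using assms(4) by (metis Reals_cnj_iff)
  have \<beta>: "\<beta> = cnj \<alpha>"
    using id[of \<alpha>] assms(1-3) \<open>\<alpha> \<noteq> cnj \<alpha>\<close> by (auto simp: D_def)
  have "\<alpha> \<noteq> 0" "\<alpha> \<noteq> 1" using assms(4) by auto
  then have "(x - \<alpha>) * (x - cnj \<alpha>) \<noteq> 0" if "x \<in> {0, 1}" for x
    using that \<open>\<alpha> \<noteq> cnj \<alpha>\<close> by (auto dest: sym)
  moreover have "(x - \<alpha>) * (x - cnj \<alpha>) * (h * D' x) = (x - \<alpha>) * (x - cnj \<alpha>) * (cnj h * D x)" for x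
    using id[of x] unfolding \<beta> by (simp add: mult_ac)
  ultimately have h0: "h * D' 0 = cnj h * D 0" and h1: "h * D' 1 = cnj h * D 1"
    by (metis insertCI mult_left_cancel)+
  have "D 1 = D 0 + of_nat (m + n)" "D' 1 = D' 0 + of_nat (m + n)"
    by (simp_all add: D_def D'_def algebra_simps)
  with h0 h1 have "h * of_nat (m + n) = cnj h * of_nat (m + n)"
    by (simp add: algebra_simps)
  moreover have "(of_nat (m + n) :: complex) \<noteq> 0" using assms(1) by (simp only: of_nat_eq_0_iff)
  ultimately have "h = cnj h" by simp
  with h0 assms(2) have "D' 0 = D 0" by simp
  then have "(of_nat m - of_nat n) * (\<alpha> - cnj \<alpha>) = 0"
    by (simp add: D_def D'_def \<beta> algebra_simps)
  with \<open>\<alpha> \<noteq> cnj \<alpha>\<close> \<open>h = cnj h\<close> show ?thesis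
    by (simp add: Reals_cnj_iff)
qed

lemma norm_diff_of_nat_less_mono:
  fixes h :: complex
  assumes "cmod (h - of_nat k) < of_nat k" "k \<le> l"
  shows "cmod (h - of_nat l) < of_nat l"
proof -
  have "cmod (h - of_nat l) \<le> cmod (h - of_nat k) + cmod (of_nat k - of_nat l :: complex)"
    using norm_triangle_ineq[of "h - of_nat k" "of_nat k - of_nat l"] by simp
  also have "cmod (of_nat k - of_nat l :: complex) = real l - real k"
    using assms(2) by (metis norm_of_nat of_nat_diff norm_minus_commute)
  finally show ?thesis using assms(1) by simp
qed

lemma two_root_newton_if_disc:
  fixes h :: complex
  assumes "cmod (h - of_nat (min m n)) < real (min m n)" "a \<noteq> b" "0 < m" "0 < n"
  shows "two_root_newton a b m n h" and "cmod (h - of_nat m) < of_nat m"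
proof -
  show "cmod (h - of_nat m) < of_nat m"
    using norm_diff_of_nat_less_mono[OF assms(1)] by simp
  have "0 < Re h" "Re h < 2 * real (min m n)"
    using assms(1) abs_Re_le_cmod[of "h - of_nat (min m n)"] by auto
  then have "h \<noteq> 0" "h \<noteq> of_nat (m + n)" by auto
  with assms(2-4) show "two_root_newton a b m n h"
    by unfold_locales
qed

context two_root_newton
begin

lemma julia_line_real_quotient:
  fixes c d :: complex
  defines "\<alpha> \<equiv> (a - c) / d" and "\<beta> \<equiv> (b - c) / d"
  assumes "d \<noteq> 0" and J: "julia_set N = insert None {Some (c + of_real t * d) |t. True}"
    and Dt: "poly (two_root_den \<alpha> \<beta> m n) (of_real t) \<noteq> 0"
  shows "h * (of_real t - \<alpha>) * (of_real t - \<beta>) / poly (two_root_den \<alpha> \<beta> m n) (of_real t) \<in> \<real>"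
proof -
  define z where "z = c + of_real t * d"
  have za: "z - a = d * (of_real t - \<alpha>)" and zb: "z - b = d * (of_real t - \<beta>)"
    using \<open>d \<noteq> 0\<close> by (simp_all add: z_def \<alpha>_def \<beta>_def field_simps)
  have den: "poly den z = d * poly (two_root_den \<alpha> \<beta> m n) (of_real t)"
    by (simp add: za zb algebra_simps)
  then have "poly den z \<noteq> 0" using Dt \<open>d \<noteq> 0\<close> by simp
  define q where "q = h * (z - a) * (z - b) / poly den z"
  have Nz: "N (Some z) = Some (z - q)" unfolding q_def by (rule N_Some) fact
  have "Some z \<in> julia_set N" unfolding J z_def by blast
  then have "N (Some z) \<in> julia_set N"
    using fatou_pullback[OF sphere_cont_at_N] by (auto simp: julia_set_def)
  then obtain s where "z - q = c + of_real s * d"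
    unfolding J Nz by auto
  then have "q = d * of_real (t - s)"
    by (simp add: z_def algebra_simps)
  moreover have "q = d * (h * (of_real t - \<alpha>) * (of_real t - \<beta>) / poly (two_root_den \<alpha> \<beta> m n) (of_real t))"
    using \<open>d \<noteq> 0\<close> Dt unfolding q_def za zb den by (simp add: field_simps del: poly_two_root_den)
  ultimately have "h * (of_real t - \<alpha>) * (of_real t - \<beta>) / poly (two_root_den \<alpha> \<beta> m n) (of_real t)
      = of_real (t - s)"
    using \<open>d \<noteq> 0\<close> by (metis mult_cancel_left)
  then show ?thesis by (metis Reals_of_real)
qed

lemma equal_mult_real_if_julia_line:
  assumes "cmod (h - of_nat m) < of_nat m" and "d \<noteq> 0"
    and J: "julia_set N = insert None {Some (c + of_real t * d) |t. True}"
  shows "m = n \<and> h \<in> \<real>"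
proof (rule equal_mult_real_if_real_on_reals)
  show "(a - c) / d \<notin> \<real>"
  proof
    assume "(a - c) / d \<in> \<real>"
    then obtain t where "(a - c) / d = of_real t" by (auto elim: Reals_cases)
    then have "Some a \<in> julia_set N" unfolding J using \<open>d \<noteq> 0\<close> by (auto simp: field_simps)
    then show False using root_in_fatou[OF assms(1)] by (simp add: julia_set_def)
  qed
  show "(a - c) / d \<noteq> (b - c) / d" using roots_distinct \<open>d \<noteq> 0\<close> by simp
qed (use mult_pos h_nonzero julia_line_real_quotient[OF \<open>d \<noteq> 0\<close> J] in auto)

lemma julia_line_if_equal_mult_real:
  assumes "cmod (h - of_nat m) < of_nat m" and "m = n" and "h \<in> \<real>"
  shows "\<exists>c d. d \<noteq> 0 \<and> julia_set N = insert None {Some (c + of_real t * d) |t. True}"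
proof -
  have "h = of_real (Re h)" using assms(3) by (simp add: complex_is_Real_iff complex_eq_iff)
  moreover have "0 < Re h" "Re h < 2 * real m"
    using assms(1,3) abs_less_iff[of "Re h - real m"] by (auto simp: complex_is_Real_iff cmod_def)
  ultimately have "julia_set N = insert None (Some ` {z. cmod (z - a) = cmod (z - b)})"
    using assms(2) julia_set_eq_bisector by blast
  then show ?thesis
    using perpendicular_bisector_eq_line[OF roots_distinct] roots_distinct
    by (intro exI[of _ "(a + b) / 2"] exI[of _ "\<i> * (b - a)"]) auto
qed

end

theorem theoremC:
  fixes p :: "complex poly" and a b h :: complex
  assumes "p \<noteq> 0" and "a \<noteq> b"
    and "{z. poly p z = 0} = {a, b}"
    and "cmod (h - of_nat (min (order a p) (order b p))) < real (min (order a p) (order b p))"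
  shows "(\<exists>c d. d \<noteq> 0 \<and>
            julia_set (relaxed_newton h p) = insert None {Some (c + complex_of_real t * d) | t. True})
         \<longleftrightarrow> (order a p = order b p \<and> h \<in> \<real>)"
proof -
  define m n where "m = order a p" and "n = order b p"
  have "0 < m" "0 < n"
    using assms(1,3) order_root[of p a] order_root[of p b] by (auto simp: m_def n_def)
  with assms(2,4) have params: "two_root_newton a b m n h" and disc: "cmod (h - of_nat m) < of_nat m"
    using two_root_newton_if_disc[of h m n a b] by (simp_all add: m_def n_def)
  interpret two_root_newton a b m n h by (rule params)
  have "relaxed_newton h p = N"
    using relaxed_newton_two_roots[OF assms(1-3)] coprime_num_den by (simp add: m_def n_def)
  then show ?thesis
    using equal_mult_real_if_julia_line[OF disc] julia_line_if_equal_mult_real[OF disc]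
    by (auto simp: m_def n_def)
qed

end
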